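(* In the brand-effects model, let the greedy allocation be defined by, for $k=1,\dots,s$ in order, placing in position $k$ the not-yet-placed ad with the highest normalized eCPM for position $k$. Then (i) for every instance, the total expected welfare of the greedy allocation is at least half of the maximum possible total expected welfare; and (ii) this bound is tight: for every $c>\frac12$ there is an instance in which the greedy allocation's total expected welfare is less than $c$ times the maximum possible total expected welfare.
   Context: Brand-effects model: there are $s$ positions and a set of advertisers, each either a brand advertiser or a non-brand advertiser; advertiser $i$ has quality score $q_i \ge 0$ and bid $b_i \ge 0$, and its eCPM bid is $b_i q_i$. Each position $k$ has two quality scores $\beta_k$ and $\eta_k$, both non-increasing in $k$, normalized so $\beta_1=\eta_1=1$. A brand (resp. non-brand) advertiser with quality $q$ shown in position $k$ is clicked with probability $\beta_k q$ (resp. $\eta_k q$). An allocation places distinct advertisers in the positions; its total expected welfare is $\sum_j b_{(j)} p_{(j)}$, where $b_{(j)}$ and $p_{(j)}$ are the bid and click probability of the ad in position $j$. The normalized eCPM of advertiser $i$ for position $k$ is $\beta_k b_i q_i$ if $i$ is a brand advertiser and $\eta_k b_i q_i$ if $i$ is a non-brand advertiser. *)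

theory Defs
  imports Main "HOL-Library.Library"
begin

text \<open>An instance of the brand-effects model. Positions are indexed 0..<npos
  (position k here is position k+1 of the paper); advertisers are indexed 0..<nadv.\<close>
record inst =
  npos  :: nat
  nadv  :: nat
  brand :: "nat \<Rightarrow> bool"
  qual  :: "nat \<Rightarrow> real"
  bid   :: "nat \<Rightarrow> real"
  beta  :: "nat \<Rightarrow> real"
  eta   :: "nat \<Rightarrow> real"

definition valid_inst :: "inst \<Rightarrow> bool" where
  "valid_inst I \<longleftrightarrow>
     (\<forall>i < nadv I. 0 \<le> qual I i \<and> 0 \<le> bid I i) \<and>
     beta I 0 = 1 \<and> eta I 0 = 1 \<and>
     (\<forall>j k. j \<le> k \<and> k < npos I \<longrightarrow> beta I k \<le> beta I j \<and> eta I k \<le> eta I j) \<and>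
     (\<forall>k < npos I. 0 \<le> beta I k \<and> 0 \<le> eta I k)"

definition click_prob :: "inst \<Rightarrow> nat \<Rightarrow> nat \<Rightarrow> real" where
  "click_prob I k i = (if brand I i then beta I k else eta I k) * qual I i"

definition norm_ecpm :: "inst \<Rightarrow> nat \<Rightarrow> nat \<Rightarrow> real" where
  "norm_ecpm I k i = (if brand I i then beta I k else eta I k) * (bid I i * qual I i)"

definition allocations :: "inst \<Rightarrow> (nat \<Rightarrow> nat option) set" where
  "allocations I = {f. (\<forall>k. npos I \<le> k \<longrightarrow> f k = None) \<and>
                       (\<forall>k i. f k = Some i \<longrightarrow> i < nadv I) \<and>
                       (\<forall>k k' i. f k = Some i \<and> f k' = Some i \<longrightarrow> k = k')}"

definition welfare :: "inst \<Rightarrow> (nat \<Rightarrow> nat option) \<Rightarrow> real" where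
  "welfare I f = (\<Sum>k<npos I. case f k of None \<Rightarrow> 0 | Some i \<Rightarrow> bid I i * click_prob I k i)"

definition opt_welfare :: "inst \<Rightarrow> real" where
  "opt_welfare I = Max (welfare I ` allocations I)"

definition remaining :: "inst \<Rightarrow> (nat \<Rightarrow> nat option) \<Rightarrow> nat \<Rightarrow> nat set" where
  "remaining I g k = {i. i < nadv I \<and> (\<forall>j<k. g j \<noteq> Some i)}"

definition is_greedy :: "inst \<Rightarrow> (nat \<Rightarrow> nat option) \<Rightarrow> bool" where
  "is_greedy I g \<longleftrightarrow>
     (\<forall>k. npos I \<le> k \<longrightarrow> g k = None) \<and>
     (\<forall>k < npos I.
        (remaining I g k = {} \<longrightarrow> g k = None) \<and>
        (remaining I g k \<noteq> {} \<longrightarrow>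
           (\<exists>i \<in> remaining I g k. g k = Some i \<and>
              (\<forall>j \<in> remaining I g k. norm_ecpm I k j \<le> norm_ecpm I k i))))"

end

theory Submission
  imports Defs
begin

text \<open>Let the optimal allocation put ad i in position k. If i is still
  unplaced when greedy fills position k, greedy earns at least the normalized eCPM of i there.
  Otherwise greedy placed i at an earlier position j, and since position scores are
  non-increasing, greedy earned at j at least what i earns at k. Injectivity of the optimal
  allocation charges every greedy position at most once in the second way, so the optimum is
  at most twice the greedy welfare.
  For tightness take two positions with \<open>\<eta>\<^sub>2 = 0\<close>, a brand ad of quality 1 and a non-brand
  ad of quality \<open>t < 1\<close>: greedy puts the brand ad first and earns 1, swapping them earns
  \<open>1 + t\<close>.\<close>

definition slot_value :: "inst \<Rightarrow> (nat \<Rightarrow> nat option) \<Rightarrow> nat \<Rightarrow> real" where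
  "slot_value I f k = (case f k of None \<Rightarrow> 0 | Some i \<Rightarrow> norm_ecpm I k i)"

lemma welfare_eq_sum_slot_value: "welfare I f = (\<Sum>k<npos I. slot_value I f k)"
  unfolding welfare_def slot_value_def
  by (rule sum.cong) (auto simp: click_prob_def norm_ecpm_def split: option.split)

lemma norm_ecpm_nonneg:
  "valid_inst I \<Longrightarrow> k < npos I \<Longrightarrow> i < nadv I \<Longrightarrow> 0 \<le> norm_ecpm I k i"
  unfolding valid_inst_def norm_ecpm_def by auto

lemma norm_ecpm_antimono:
  assumes "valid_inst I" "j \<le> k" "k < npos I" "i < nadv I"
  shows "norm_ecpm I k i \<le> norm_ecpm I j i"
  unfolding norm_ecpm_def by (rule mult_right_mono) (use assms in \<open>auto simp: valid_inst_def\<close>)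

lemma finite_allocations: "finite (allocations I)"
proof -
  let ?S = "PiE {..<npos I} (\<lambda>_. insert None (Some ` {..<nadv I}))"
  let ?ext = "\<lambda>h k. if k < npos I then h k else None"
  have "allocations I \<subseteq> ?ext ` ?S"
  proof
    fix f assume f: "f \<in> allocations I"
    have "f k \<in> insert None (Some ` {..<nadv I})" for k
      using f by (cases "f k") (auto simp: allocations_def)
    then have "restrict f {..<npos I} \<in> ?S" by (simp add: restrict_PiE_iff)
    moreover have "f = ?ext (restrict f {..<npos I})"
      using f by (auto simp: allocations_def)
    ultimately show "f \<in> ?ext ` ?S" by blast
  qed
  then show ?thesis by (rule finite_subset) (intro finite_imageI finite_PiE; auto)
qed

lemma welfare_le_opt_welfare: "f \<in> allocations I \<Longrightarrow> welfare I f \<le> opt_welfare I"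
  unfolding opt_welfare_def by (rule Max_ge) (auto simp: finite_allocations)

lemma opt_welfare_attained: "\<exists>f \<in> allocations I. welfare I f = opt_welfare I"
proof -
  have "(\<lambda>_. None) \<in> allocations I" by (simp add: allocations_def)
  then have "opt_welfare I \<in> welfare I ` allocations I"
    unfolding opt_welfare_def by (intro Max_in) (auto simp: finite_allocations)
  then show ?thesis by auto
qed

lemma greedy_Some_remaining:
  assumes "is_greedy I g" "g k = Some i"
  shows "k < npos I \<and> i \<in> remaining I g k"
proof -
  have k: "k < npos I" using assms by (metis is_greedy_def not_le option.distinct(1))
  then have "remaining I g k \<noteq> {}" using assms by (auto simp: is_greedy_def)
  with k show ?thesis using assms by (auto simp: is_greedy_def)
qed

lemma greedy_slot_value_nonneg:
  assumes "valid_inst I" "is_greedy I g"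
  shows "0 \<le> slot_value I g k"
proof (cases "g k")
  case (Some i)
  with greedy_Some_remaining[OF assms(2) Some] show ?thesis
    using norm_ecpm_nonneg[OF assms(1)] by (simp add: slot_value_def remaining_def)
qed (simp add: slot_value_def)

lemma greedy_picks_max:
  assumes "is_greedy I g" "k < npos I" "remaining I g k \<noteq> {}"
  obtains i where "i \<in> remaining I g k" "g k = Some i"
    "\<And>j. j \<in> remaining I g k \<Longrightarrow> norm_ecpm I k j \<le> norm_ecpm I k i"
  using assms unfolding is_greedy_def by blast

lemma greedy_slot_value_ge_remaining:
  assumes "is_greedy I g" "k < npos I" "i \<in> remaining I g k"
  shows "norm_ecpm I k i \<le> slot_value I g k"
proof -
  have "remaining I g k \<noteq> {}" using assms(3) by auto
  then obtain i' where "g k = Some i'" "norm_ecpm I k i \<le> norm_ecpm I k i'"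
    using greedy_picks_max assms by metis
  then show ?thesis by (simp add: slot_value_def)
qed

text \<open>The charging scheme: \<open>K\<close> holds the positions whose optimal ad greedy placed earlier,
  and \<open>\<sigma> k\<close> is that earlier position.\<close>

lemma greedy_charging:
  assumes v: "valid_inst I" and gr: "is_greedy I g" and f: "f \<in> allocations I"
  obtains K \<sigma> where "K \<subseteq> {..<npos I}" "inj_on \<sigma> K" "\<sigma> ` K \<subseteq> {..<npos I}"
    "\<And>k. k < npos I \<Longrightarrow>
       slot_value I f k \<le> slot_value I g k + (if k \<in> K then slot_value I g (\<sigma> k) else 0)"
proof
  define K where "K = {k. k < npos I \<and> f k \<noteq> None \<and> (\<exists>j<k. g j = f k)}"
  define \<sigma> where "\<sigma> = (\<lambda>k. SOME j. j < k \<and> g j = f k)"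
  have \<sigma>: "\<sigma> k < k \<and> g (\<sigma> k) = f k" if "k \<in> K" for k
    unfolding \<sigma>_def by (rule someI_ex) (use that in \<open>auto simp: K_def\<close>)
  have nonneg: "0 \<le> slot_value I g k" for k by (rule greedy_slot_value_nonneg[OF v gr])
  show "K \<subseteq> {..<npos I}" by (auto simp: K_def)
  show "\<sigma> ` K \<subseteq> {..<npos I}" using \<sigma> by (force simp: K_def)
  show "inj_on \<sigma> K"
  proof (rule inj_onI)
    fix a b assume ab: "a \<in> K" "b \<in> K" "\<sigma> a = \<sigma> b"
    then have "f a = f b" using \<sigma>[OF ab(1)] \<sigma>[OF ab(2)] by simp
    moreover obtain i where "f a = Some i" using ab(1) by (auto simp: K_def)
    ultimately show "a = b" using f by (simp add: allocations_def) metis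
  qed
  fix k assume k: "k < npos I"
  show "slot_value I f k \<le> slot_value I g k + (if k \<in> K then slot_value I g (\<sigma> k) else 0)"
  proof (cases "f k")
    case None then show ?thesis using nonneg by (simp add: slot_value_def)
  next
    case (Some i)
    have i: "i < nadv I" using f Some by (auto simp: allocations_def)
    show ?thesis
    proof (cases "i \<in> remaining I g k")
      case True
      then show ?thesis
        using greedy_slot_value_ge_remaining[OF gr k True] nonneg[of "\<sigma> k"] Some
        by (simp add: slot_value_def)
    next
      case False
      then obtain j where "j < k" "g j = Some i" using i by (auto simp: remaining_def)
      then have kK: "k \<in> K" using k Some by (auto simp: K_def)
      with \<sigma> Some have s: "\<sigma> k < k" "g (\<sigma> k) = Some i" by auto
      have "slot_value I f k = norm_ecpm I k i" using Some by (simp add: slot_value_def)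
      also have "\<dots> \<le> norm_ecpm I (\<sigma> k) i" using norm_ecpm_antimono[OF v _ k i] s by simp
      also have "\<dots> = slot_value I g (\<sigma> k)" using s by (simp add: slot_value_def)
      finally show ?thesis using nonneg[of k] kK by simp
    qed
  qed
qed

lemma greedy_half_approximation:
  assumes v: "valid_inst I" and gr: "is_greedy I g" and f: "f \<in> allocations I"
  shows "welfare I f \<le> 2 * welfare I g"
proof -
  obtain K \<sigma> where K: "K \<subseteq> {..<npos I}" and inj: "inj_on \<sigma> K"
    and \<sigma>K: "\<sigma> ` K \<subseteq> {..<npos I}"
    and charge: "\<And>k. k < npos I \<Longrightarrow>
       slot_value I f k \<le> slot_value I g k + (if k \<in> K then slot_value I g (\<sigma> k) else 0)"
    using greedy_charging[OF v gr f] by blast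
  let ?G = "slot_value I g"
  have "welfare I f \<le> (\<Sum>k<npos I. ?G k + (if k \<in> K then ?G (\<sigma> k) else 0))"
    unfolding welfare_eq_sum_slot_value by (rule sum_mono) (use charge in auto)
  also have "\<dots> = welfare I g + (\<Sum>k\<in>K. ?G (\<sigma> k))"
    using K by (simp add: welfare_eq_sum_slot_value sum.distrib sum.If_cases Int_absorb1)
  also have "(\<Sum>k\<in>K. ?G (\<sigma> k)) = (\<Sum>j\<in>\<sigma> ` K. ?G j)"
    using inj by (simp add: sum.reindex)
  also have "\<dots> \<le> welfare I g"
    unfolding welfare_eq_sum_slot_value
    by (rule sum_mono2) (use \<sigma>K greedy_slot_value_nonneg[OF v gr] in auto)
  finally show ?thesis by simp
qed

definition tight_inst :: "real \<Rightarrow> inst" where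
  "tight_inst t = \<lparr>npos = 2, nadv = 2, brand = (\<lambda>i. i = 0),
     qual = (\<lambda>i. if i = 0 then 1 else t), bid = (\<lambda>_. 1), beta = (\<lambda>_. 1),
     eta = (\<lambda>k. if k = 0 then 1 else 0)\<rparr>"

lemma valid_tight_inst: "0 \<le> t \<Longrightarrow> valid_inst (tight_inst t)"
  by (auto simp: tight_inst_def valid_inst_def)

lemma remaining_tight_inst_0: "remaining (tight_inst t) g 0 = {0, 1}"
  by (auto simp: remaining_def tight_inst_def)

lemma greedy_tight_inst_exists:
  assumes "t \<le> 1"
  shows "is_greedy (tight_inst t) (\<lambda>k. if k = 0 then Some 0 else if k = 1 then Some 1 else None)"
    (is "is_greedy ?I ?g")
  unfolding is_greedy_def
proof (intro conjI allI impI)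
  fix k assume "npos ?I \<le> k" then show "?g k = None" by (simp add: tight_inst_def)
next
  fix k assume k: "k < npos ?I" "remaining ?I ?g k = {}"
  then have "1 \<in> remaining ?I ?g k" by (auto simp: remaining_def tight_inst_def)
  with k show "?g k = None" by simp
next
  fix k assume "k < npos ?I"
  then consider "k = 0" | "k = 1" by (fastforce simp: tight_inst_def)
  then show "\<exists>i \<in> remaining ?I ?g k. ?g k = Some i \<and>
               (\<forall>j \<in> remaining ?I ?g k. norm_ecpm ?I k j \<le> norm_ecpm ?I k i)"
  proof cases
    case 1
    have "norm_ecpm ?I 0 j \<le> norm_ecpm ?I 0 0" if "j \<in> {0, 1}" for j
      using assms that by (auto simp: norm_ecpm_def tight_inst_def)
    then show ?thesis unfolding 1 remaining_tight_inst_0 by auto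
  next
    case 2
    have "remaining ?I ?g 1 = {1}" by (auto simp: remaining_def tight_inst_def)
    with 2 show ?thesis by simp
  qed
qed

lemma welfare_greedy_tight_inst:
  assumes "t < 1" and gr: "is_greedy (tight_inst t) g"
  shows "welfare (tight_inst t) g \<le> 1"
proof -
  let ?I = "tight_inst t"
  have "0 < npos ?I" by (simp add: tight_inst_def)
  moreover have "remaining ?I g 0 \<noteq> {}" by (simp add: remaining_tight_inst_0)
  ultimately obtain i where "i \<in> remaining ?I g 0" "g 0 = Some i"
    and max: "\<And>j. j \<in> remaining ?I g 0 \<Longrightarrow> norm_ecpm ?I 0 j \<le> norm_ecpm ?I 0 i"
    using greedy_picks_max[OF gr] by blast
  moreover have "norm_ecpm ?I 0 0 \<le> norm_ecpm ?I 0 i"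
    by (rule max) (simp add: remaining_tight_inst_0)
  ultimately have g0: "g 0 = Some 0"
    unfolding remaining_tight_inst_0
    using \<open>t < 1\<close> by (auto simp: norm_ecpm_def tight_inst_def)
  have "slot_value ?I g 1 = 0"
  proof (cases "g 1")
    case (Some j)
    then have "j \<in> remaining ?I g 1" using greedy_Some_remaining[OF gr] by blast
    then have "j = 1" using g0 by (auto simp: remaining_def tight_inst_def)
    then show ?thesis using Some by (simp add: slot_value_def norm_ecpm_def tight_inst_def)
  qed (simp add: slot_value_def)
  then show ?thesis
    using g0 by (simp add: welfare_eq_sum_slot_value tight_inst_def numeral_2_eq_2
                           slot_value_def norm_ecpm_def)
qed

lemma opt_welfare_tight_inst: "1 + t \<le> opt_welfare (tight_inst t)"
proof -
  let ?f = "\<lambda>k. if k = 0 then Some 1 else if k = 1 then Some 0 else None"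
  have "?f \<in> allocations (tight_inst t)"
    by (auto simp: allocations_def tight_inst_def split: if_splits)
  moreover have "welfare (tight_inst t) ?f = 1 + t"
    by (simp add: welfare_eq_sum_slot_value tight_inst_def numeral_2_eq_2 slot_value_def
                  norm_ecpm_def)
  ultimately show ?thesis using welfare_le_opt_welfare by metis
qed

theorem theorem6:
  shows "(\<forall>I g. valid_inst I \<and> is_greedy I g \<longrightarrow> welfare I g \<ge> opt_welfare I / 2) \<and>
         (\<forall>c::real. c > 1/2 \<longrightarrow>
            (\<exists>I. valid_inst I \<and> (\<exists>g. is_greedy I g) \<and>
                 (\<forall>g. is_greedy I g \<longrightarrow> welfare I g < c * opt_welfare I)))"
proof (intro conjI allI impI)
  fix I g assume "valid_inst I \<and> is_greedy I g"
  moreover obtain f where "f \<in> allocations I" "welfare I f = opt_welfare I"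
    using opt_welfare_attained by blast
  ultimately show "welfare I g \<ge> opt_welfare I / 2"
    using greedy_half_approximation by fastforce
next
  fix c :: real assume c: "c > 1/2"
  define t where "t = 1 / (2 * c)"
  have t: "0 < t" "t < 1" "c * (1 + t) > 1" using c by (auto simp: t_def field_simps)
  have "welfare (tight_inst t) g < c * opt_welfare (tight_inst t)"
    if "is_greedy (tight_inst t) g" for g
  proof -
    have "welfare (tight_inst t) g \<le> 1" using welfare_greedy_tight_inst t that by blast
    also have "1 < c * (1 + t)" by (fact t(3))
    also have "\<dots> \<le> c * opt_welfare (tight_inst t)"
      using opt_welfare_tight_inst c by (simp add: mult_left_mono)
    finally show ?thesis .
  qed
  moreover have "valid_inst (tight_inst t)" using t by (simp add: valid_tight_inst)
  moreover have "\<exists>g. is_greedy (tight_inst t) g"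
    using greedy_tight_inst_exists[of t] t(2) by (metis less_imp_le)
  ultimately show "\<exists>I. valid_inst I \<and> (\<exists>g. is_greedy I g) \<and>
                 (\<forall>g. is_greedy I g \<longrightarrow> welfare I g < c * opt_welfare I)"
    by blast
qed

end
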